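(* Let $s>-1$. For every $\varepsilon>0$ there exists $R>0$ such that $$\sup_{n\in\mathbb N}\int_R^{+\infty}K^{(n,s)}(x,x)\,dx<\varepsilon .$$
   Context: For $s>-1$ and $n\in\mathbb N$, let $L^{(s,n)}\subset L_2((0,+\infty),dx)$ be the $n$-dimensional subspace spanned by the functions $$x\mapsto \frac{1}{(n^2x+1)^{s/2+1}}\left(\frac{n^2x-1}{n^2x+1}\right)^{l},\qquad l=0,1,\dots,n-1,$$ and let $K^{(n,s)}(x,y)$ be the (continuous) kernel of the orthogonal projection of $L_2((0,+\infty),dx)$ onto $L^{(s,n)}$; thus $K^{(n,s)}(x,x)=\sum_{l}|e_l(x)|^2$ for any orthonormal basis $(e_l)$ of $L^{(s,n)}$. Equivalently, $K^{(n,s)}(x,y)=n^2\hat K_n^{(s)}(n^2x,n^2y)$, where $\hat K_n^{(s)}$ is the Christoffel–Darboux kernel of the Jacobi polynomials for the weight $(1-u)^s$ on $[-1,1]$ transported by the change of variable $u=(\lambda-1)/(\lambda+1)$. *)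

theory Defs
  imports "HOL-Analysis.Analysis"
begin

definition basis_fun :: "nat \<Rightarrow> real \<Rightarrow> nat \<Rightarrow> real \<Rightarrow> real" where
  "basis_fun n s l x =
     ((real n)^2 * x + 1) powr (-(s/2 + 1)) * (((real n)^2 * x - 1) / ((real n)^2 * x + 1)) ^ l"

text \<open>e_0,...,e_{n-1} is an orthonormal family in L_2((0,+inf)) lying in L^(s,n)
  (hence, by dimension count, an orthonormal basis of L^(s,n)).\<close>
definition is_onb :: "nat \<Rightarrow> real \<Rightarrow> (nat \<Rightarrow> real \<Rightarrow> real) \<Rightarrow> bool" where
  "is_onb n s e \<longleftrightarrow>
     (\<forall>i<n. \<exists>c :: nat \<Rightarrow> real. \<forall>x>0. e i x = (\<Sum>l<n. c l * basis_fun n s l x)) \<and>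
     (\<forall>i<n. \<forall>j<n. set_integrable lborel {0<..} (\<lambda>x. e i x * e j x) \<and>
        (LINT x:{0<..}|lborel. e i x * e j x) = (if i = j then 1 else 0))"

text \<open>Diagonal of the projection kernel: K^(n,s)(x,x) = sum_l |e_l(x)|^2.\<close>
definition Kdiag :: "nat \<Rightarrow> real \<Rightarrow> real \<Rightarrow> real" where
  "Kdiag n s x = (let e = (SOME e. is_onb n s e) in \<Sum>l<n. (e l x)^2)"

end

theory Submission
  imports Defs "HOL-Computational_Algebra.Polynomial" "HOL-Real_Asymp.Real_Asymp"
begin

text \<open>In the variable t = 1/(n^2 x + 1) the space L^(s,n) consists of the functions
  (n^2 x + 1)^(-(s/2+1)) q(t) with deg q < n, and the shifted Jacobi polynomials P_k, orthogonal
  for t^s dt on [0,1], give an explicit orthonormal basis J_k of it (orthogonality is a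
  computation with alternating binomial sums). Whatever orthonormal basis defines the kernel,
  Bessel's inequality bounds K^(n,s)(x,x) by the sum of the J_k(x)^2. For x \<ge> 1 and k < n
  we have k^2 t \<le> 1, where |P_k(t)| \<le> E (s+1)_k; together with
  sum_{k<n} (2k+s+1) ((s+1)_k/k!)^2 = O(n^(2s+2)) (Gauss's product for Gamma) this yields
  K^(n,s)(x,x) \<le> C x^(-(s+2)) uniformly in n, so the tail integrals are at most
  C R^(-(s+1))/(s+1).\<close>

section \<open>Alternating binomial sums\<close>

lemma alternating_binomial_sum_Suc:
  fixes f :: "nat \<Rightarrow> real"
  shows "(\<Sum>b\<le>Suc k. real (Suc k choose b) * (-1)^b * f b) =
         (\<Sum>b\<le>k. real (k choose b) * (-1)^b * (f b - f (Suc b)))"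
proof -
  have "(\<Sum>b\<le>Suc k. real (Suc k choose b) * (-1)^b * f b) =
        (\<Sum>b\<le>Suc k. real (k choose b) * (-1)^b * f b) +
        (\<Sum>b\<le>Suc k. (if b = 0 then 0 else real (k choose (b - 1))) * (-1)^b * f b)"
    by (subst sum.distrib[symmetric], rule sum.cong)
       (auto simp: algebra_simps gr0_conv_Suc)
  also have "(\<Sum>b\<le>Suc k. real (k choose b) * (-1)^b * f b) =
             (\<Sum>b\<le>k. real (k choose b) * (-1)^b * f b)"
    by simp
  also have "(\<Sum>b\<le>Suc k. (if b = 0 then 0 else real (k choose (b - 1))) * (-1)^b * f b) =
             (\<Sum>b\<le>k. real (k choose b) * (-1)^(Suc b) * f (Suc b))"
    by (subst sum.atMost_Suc_shift) simp
  finally show ?thesis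
    by (simp add: sum_subtractf[symmetric] algebra_simps sum.distrib[symmetric])
qed

lemma degree_diff_pcompose_shift_less:
  fixes q :: "'a::idom poly"
  assumes "degree q > 0"
  shows "degree (q - pcompose q [:1, 1:]) < degree q"
proof -
  let ?d = "q - pcompose q [:1, 1:]"
  have "degree (pcompose q [:1, 1:]) = degree q" by (simp add: degree_pcompose)
  then have "degree ?d \<le> degree q" by (metis degree_diff_le le_refl)
  moreover have "lead_coeff (pcompose q [:1, 1:]) = lead_coeff q"
    by (simp add: lead_coeff_comp)
  then have "coeff ?d (degree q) = 0"
    using \<open>degree (pcompose q [:1, 1:]) = degree q\<close> by simp
  ultimately show ?thesis
    by (metis assms le_neq_implies_less leading_coeff_0_iff degree_0)
qed

lemma alternating_binomial_sum_poly:
  fixes q :: "real poly"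
  assumes "degree q < k"
  shows "(\<Sum>b\<le>k. real (k choose b) * (-1)^b * poly q (real b)) = 0"
  using assms
proof (induction k arbitrary: q)
  case 0
  then show ?case by simp
next
  case (Suc k)
  let ?d = "q - pcompose q [:1, 1:]"
  have "(\<Sum>b\<le>Suc k. real (Suc k choose b) * (-1)^b * poly q (real b)) =
        (\<Sum>b\<le>k. real (k choose b) * (-1)^b * poly ?d (real b))"
    by (subst alternating_binomial_sum_Suc) (simp add: poly_pcompose algebra_simps)
  also have "\<dots> = 0"
  proof (cases "degree q = 0")
    case True
    then obtain c where "q = [:c:]" by (metis degree_eq_zeroE)
    then show ?thesis by (simp add: pcompose_pCons)
  next
    case False
    then have "degree ?d < k"
      using degree_diff_pcompose_shift_less[of q] Suc.prems by simp
    then show ?thesis by (rule Suc.IH)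
  qed
  finally show ?case .
qed

lemma alternating_binomial_sum_inverse:
  fixes y :: real
  assumes "y > 0"
  shows "(\<Sum>b\<le>k. real (k choose b) * (-1)^b / (y + real b)) = fact k / pochhammer y (Suc k)"
  using assms
proof (induction k arbitrary: y)
  case 0
  then show ?case by simp
next
  case (Suc k)
  have "(\<Sum>b\<le>Suc k. real (Suc k choose b) * (-1)^b / (y + real b)) =
        (\<Sum>b\<le>k. real (k choose b) * (-1)^b / (y + real b)) -
        (\<Sum>b\<le>k. real (k choose b) * (-1)^b / ((y + 1) + real b))"
    using alternating_binomial_sum_Suc[of k "\<lambda>b. 1 / (y + real b)"]
    by (simp add: sum_subtractf[symmetric] algebra_simps)
  also have "\<dots> = fact k / pochhammer y (Suc k) - fact k / pochhammer (y + 1) (Suc k)"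
    using Suc by simp
  also have "\<dots> = fact (Suc k) / pochhammer y (Suc (Suc k))"
  proof -
    define A where "A = pochhammer (y + 1) k"
    have "A > 0" unfolding A_def using Suc.prems by (intro pochhammer_pos) simp
    moreover have Suc_k: "pochhammer y (Suc k) = y * A" unfolding A_def by (simp add: pochhammer_rec)
    moreover have "pochhammer (y + 1) (Suc k) = A * (y + 1 + k)"
      unfolding A_def by (simp add: pochhammer_Suc)
    moreover have "pochhammer y (Suc (Suc k)) = y * A * (y + 1 + k)"
      using Suc_k by (simp add: pochhammer_Suc algebra_simps)
    ultimately show ?thesis
      using Suc.prems by (simp add: divide_simps) (simp add: algebra_simps)
  qed
  finally show ?case .
qed

text \<open>Divide p by b + y: only the remainder p(-y)/(y + b) survives the alternating sum,
  the quotient having degree < k.\<close>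
lemma alternating_binomial_sum_poly_divide:
  fixes y :: real and p :: "real poly"
  assumes "y > 0" "degree p \<le> k"
  shows "(\<Sum>b\<le>k. real (k choose b) * (-1)^b * (poly p (real b) / (y + real b))) =
         poly p (-y) * fact k / pochhammer y (Suc k)"
proof -
  define c where "c = poly p (-y)"
  have "[:y, 1:] dvd (p - [:c:])"
    using poly_eq_0_iff_dvd[of "p - [:c:]" "-y"] by (simp add: c_def)
  then obtain q where q: "p - [:c:] = [:y, 1:] * q" by (elim dvdE)
  have q_sum: "(\<Sum>b\<le>k. real (k choose b) * (-1)^b * poly q (real b)) = 0"
  proof (cases "q = 0")
    case False
    then have "degree (p - [:c:]) = 1 + degree q" unfolding q by (subst degree_mult_eq) auto
    moreover have "degree (p - [:c:]) \<le> k"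
      using assms(2) by (intro degree_diff_le) auto
    ultimately show ?thesis by (intro alternating_binomial_sum_poly) simp
  qed simp
  have "poly p (real b) / (y + real b) = poly q (real b) + c / (y + real b)" for b
  proof -
    have "poly p (real b) = (y + real b) * poly q (real b) + c"
      using arg_cong[OF q, of "\<lambda>r. poly r (real b)"] by (simp add: algebra_simps)
    then show ?thesis using assms(1) by (simp add: field_simps)
  qed
  then have "(\<Sum>b\<le>k. real (k choose b) * (-1)^b * (poly p (real b) / (y + real b))) =
      (\<Sum>b\<le>k. real (k choose b) * (-1)^b * poly q (real b)) +
      c * (\<Sum>b\<le>k. real (k choose b) * (-1)^b / (y + real b))"
    by (simp add: sum.distrib sum_distrib_left algebra_simps)
  then show ?thesis
    using q_sum alternating_binomial_sum_inverse[OF assms(1)] by (simp add: c_def)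
qed

section \<open>Shifted Jacobi polynomials\<close>

definition jacobi_coeff :: "real \<Rightarrow> nat \<Rightarrow> nat \<Rightarrow> real" where
  "jacobi_coeff s k a = real (k choose a) * (-1)^a * pochhammer (s + real a + 1) k"

text \<open>Up to normalisation, the shifted Jacobi polynomial P_k of degree k orthogonal on [0,1]
  for the weight t^s; as 1 - u = 2t for t = 1/(\<lambda> + 1), this is the weight (1-u)^s.\<close>
definition jacobi_poly :: "real \<Rightarrow> nat \<Rightarrow> real poly" where
  "jacobi_poly s k = (\<Sum>a\<le>k. monom (jacobi_coeff s k a) a)"

lemma poly_jacobi_poly: "poly (jacobi_poly s k) t = (\<Sum>a\<le>k. jacobi_coeff s k a * t^a)"
  by (simp add: jacobi_poly_def poly_sum poly_monom)

lemma degree_jacobi_poly_le: "degree (jacobi_poly s k) \<le> k"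
  unfolding jacobi_poly_def
  by (rule degree_sum_le) (auto intro: order.trans[OF degree_monom_le])

lemma coeff_jacobi_poly_degree: "coeff (jacobi_poly s k) k = jacobi_coeff s k k"
  by (simp add: jacobi_poly_def coeff_sum coeff_monom)

lemma jacobi_coeff_degree_nonzero: "s > -1 \<Longrightarrow> jacobi_coeff s k k \<noteq> 0"
  using pochhammer_pos[of "s + real k + 1" k] by (simp add: jacobi_coeff_def)

text \<open>The coefficient (s + b + 1)_k is a polynomial of degree k in b, and its value (-a)_k
  at the pole b = -(s + 1 + a) vanishes for a < k.\<close>
lemma jacobi_moment:
  assumes "s > -1"
  shows "(\<Sum>b\<le>k. jacobi_coeff s k b / (s + 1 + real a + real b)) =
         pochhammer (- real a) k * fact k / pochhammer (s + 1 + real a) (Suc k)"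
proof -
  define P :: "real poly" where "P = (\<Prod>r<k. [:s + 1 + real r, 1:])"
  have poly_P: "poly P x = pochhammer (s + x + 1) k" for x
    by (simp add: P_def poly_prod pochhammer_prod algebra_simps atLeast0LessThan)
  have "degree P = k"
    unfolding P_def by (subst degree_prod_eq_sum_degree) auto
  have "(\<Sum>b\<le>k. jacobi_coeff s k b / (s + 1 + real a + real b)) =
        (\<Sum>b\<le>k. real (k choose b) * (-1)^b * (poly P (real b) / ((s + 1 + real a) + real b)))"
    by (simp add: jacobi_coeff_def poly_P algebra_simps)
  also have "\<dots> = poly P (-(s + 1 + real a)) * fact k / pochhammer (s + 1 + real a) (Suc k)"
    using assms \<open>degree P = k\<close> by (intro alternating_binomial_sum_poly_divide) auto
  finally show ?thesis by (simp add: poly_P)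
qed

text \<open>The double sum is the integral of t^s P_j(t) P_k(t) over [0,1].\<close>
lemma jacobi_orthogonality_le:
  assumes "s > -1" "j \<le> k"
  shows "(\<Sum>a\<le>j. \<Sum>b\<le>k. jacobi_coeff s j a * jacobi_coeff s k b / (s + 1 + real a + real b)) =
         (if j = k then (fact k)^2 / (s + 2 * real k + 1) else 0)"
proof -
  define m where "m a = pochhammer (- real a) k * fact k / pochhammer (s + 1 + real a) (Suc k)"
    for a
  have "(\<Sum>a\<le>j. \<Sum>b\<le>k. jacobi_coeff s j a * jacobi_coeff s k b / (s + 1 + real a + real b)) =
        (\<Sum>a\<le>j. jacobi_coeff s j a * m a)"
    by (simp add: m_def jacobi_moment[OF assms(1), symmetric] sum_distrib_left)
  also have "\<dots> = (\<Sum>a\<le>j. if a = k then jacobi_coeff s k k * m k else 0)"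
    using assms(2) by (intro sum.cong refl) (auto simp: m_def pochhammer_eq_0_iff)
  also have "\<dots> = (if j = k then jacobi_coeff s k k * m k else 0)"
    using assms(2) by (simp add: sum.delta)
  also have "jacobi_coeff s k k * m k = (fact k)^2 / (s + 2 * real k + 1)"
  proof -
    define P where "P = pochhammer (s + real k + 1) k"
    have "P > 0" unfolding P_def using assms(1) by (intro pochhammer_pos) simp
    have "s + 2 * real k + 1 > 0" using assms(1) by simp
    have "pochhammer (s + 1 + real k) (Suc k) = P * (s + 2 * real k + 1)"
      unfolding P_def by (simp add: pochhammer_Suc algebra_simps)
    moreover have "pochhammer (- real k) k = (-1)^k * fact k"
      by (simp add: pochhammer_same)
    moreover have "jacobi_coeff s k k = (-1)^k * P" by (simp add: jacobi_coeff_def P_def)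
    ultimately have "jacobi_coeff s k k * m k =
        ((-1)^k * (-1)^k) * (P * (fact k * fact k)) / (P * (s + 2 * real k + 1))"
      by (simp add: m_def algebra_simps)
    also have "\<dots> = (fact k)^2 / (s + 2 * real k + 1)"
      using \<open>P > 0\<close> by (simp add: power2_eq_square flip: power_mult_distrib)
    finally show ?thesis .
  qed
  finally show ?thesis by simp
qed

lemma jacobi_orthogonality:
  assumes "s > -1"
  shows "(\<Sum>a\<le>j. \<Sum>b\<le>k. jacobi_coeff s j a * jacobi_coeff s k b / (s + 1 + real a + real b)) =
         (if j = k then (fact k)^2 / (s + 2 * real k + 1) else 0)"
proof (cases "j \<le> k")
  case False
  have "(\<Sum>a\<le>j. \<Sum>b\<le>k. jacobi_coeff s j a * jacobi_coeff s k b / (s + 1 + real a + real b)) =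
        (\<Sum>b\<le>k. \<Sum>a\<le>j. jacobi_coeff s k b * jacobi_coeff s j a / (s + 1 + real b + real a))"
    by (subst sum.swap) (simp add: algebra_simps)
  then show ?thesis using jacobi_orthogonality_le[OF assms, of k j] False by simp
qed (use jacobi_orthogonality_le[OF assms] in blast)

lemma poly_in_span_jacobi_poly:
  assumes "s > -1" "degree R < N"
  shows "\<exists>d. R = (\<Sum>k<N. smult (d k) (jacobi_poly s k))"
  using assms(2)
proof (induction N arbitrary: R)
  case 0
  then show ?case by simp
next
  case (Suc N)
  define r where "r = coeff R N / jacobi_coeff s N N"
  define R' where "R' = R - smult r (jacobi_poly s N)"
  have "degree R' \<le> N"
    unfolding R'_def using Suc.prems degree_jacobi_poly_le[of s N]
    by (intro degree_diff_le) (auto intro: order.trans[OF degree_smult_le])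
  moreover have "coeff R' N = 0"
    unfolding R'_def r_def using jacobi_coeff_degree_nonzero[OF assms(1)]
    by (simp add: coeff_jacobi_poly_degree)
  ultimately have "R' = 0 \<or> degree R' < N"
    by (metis le_neq_implies_less leading_coeff_0_iff)
  then obtain d where d: "R' = (\<Sum>k<N. smult (d k) (jacobi_poly s k))"
  proof
    assume "R' = 0"
    then show ?thesis using that[of "\<lambda>_. 0"] by simp
  qed (use Suc.IH that in blast)
  have "R = (\<Sum>k<Suc N. smult ((d(N := r)) k) (jacobi_poly s k))"
    using d by (simp add: R'_def)
  then show ?case by blast
qed

section \<open>An explicit orthonormal basis of L^(s,n)\<close>

lemma set_integrable_sum:
  fixes f :: "'i \<Rightarrow> 'a \<Rightarrow> 'b::{banach, second_countable_topology}"
  assumes "\<And>i. i \<in> I \<Longrightarrow> set_integrable M A (f i)"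
  shows "set_integrable M A (\<lambda>x. \<Sum>i\<in>I. f i x)"
  unfolding set_integrable_def scaleR_sum_right
  by (rule Bochner_Integration.integrable_sum) (use assms in \<open>simp add: set_integrable_def\<close>)

lemma set_integral_sum:
  fixes f :: "'i \<Rightarrow> 'a \<Rightarrow> 'b::{banach, second_countable_topology}"
  assumes "\<And>i. i \<in> I \<Longrightarrow> set_integrable M A (f i)"
  shows "(LINT x:A|M. (\<Sum>i\<in>I. f i x)) = (\<Sum>i\<in>I. LINT x:A|M. f i x)"
  unfolding set_lebesgue_integral_def scaleR_sum_right
  by (rule Bochner_Integration.integral_sum) (use assms in \<open>simp add: set_integrable_def\<close>)

lemma nn_integral_affine_powr:
  fixes c p :: real
  assumes c: "c > 0" and p: "p > 1"
  shows "(\<integral>\<^sup>+x. ennreal ((c * x + 1) powr (-p)) * indicator {0..} x \<partial>lborel) =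
         ennreal (1 / (c * (p - 1)))"
proof -
  define F where "F x = - ((c * x + 1) powr (1 - p)) / (c * (p - 1))" for x
  have "(\<integral>\<^sup>+x. ennreal ((c * x + 1) powr (-p)) * indicator {0..} x \<partial>lborel) = 0 - F 0"
  proof (rule nn_integral_FTC_atLeast)
    show "DERIV F x :> (c * x + 1) powr (-p)" if "0 \<le> x" for x
    proof -
      have "c * x + 1 > 0" using that c by (simp add: add_nonneg_pos)
      then have "DERIV F x :> - ((1 - p) * (c * x + 1) powr (1 - p - 1) * c) / (c * (p - 1))"
        unfolding F_def using c p by (auto intro!: derivative_eq_intros)
      also have "- ((1 - p) * (c * x + 1) powr (1 - p - 1) * c) / (c * (p - 1)) = (c * x + 1) powr (-p)"
        using c p by (simp add: field_simps)
      finally show ?thesis .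
    qed
    show "(F \<longlongrightarrow> 0) at_top" unfolding F_def using c p by real_asymp
  qed auto
  then show ?thesis by (simp add: F_def)
qed

lemma set_integral_affine_powr:
  fixes c p :: real
  assumes "c > 0" "p > 1"
  shows "set_integrable lborel {0<..} (\<lambda>x. (c * x + 1) powr (-p))"
    and "(LINT x:{0<..}|lborel. (c * x + 1) powr (-p)) = 1 / (c * (p - 1))"
proof -
  have "(\<integral>\<^sup>+x. ennreal (indicator {0<..} x * (c * x + 1) powr (-p)) \<partial>lborel) =
        (\<integral>\<^sup>+x. ennreal ((c * x + 1) powr (-p)) * indicator {0..} x \<partial>lborel)"
    using AE_lborel_singleton[of "0::real"]
    by (intro nn_integral_cong_AE) (auto elim!: eventually_mono split: split_indicator)
  also have "\<dots> = ennreal (1 / (c * (p - 1)))" by (rule nn_integral_affine_powr[OF assms])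
  finally have "integrable lborel (\<lambda>x. indicator {0<..} x * (c * x + 1) powr (-p)) \<and>
      integral\<^sup>L lborel (\<lambda>x. indicator {0<..} x * (c * x + 1) powr (-p)) = 1 / (c * (p - 1))"
    using assms by (subst (asm) nn_integral_eq_integrable) auto
  then show "set_integrable lborel {0<..} (\<lambda>x. (c * x + 1) powr (-p))"
    and "(LINT x:{0<..}|lborel. (c * x + 1) powr (-p)) = 1 / (c * (p - 1))"
    by (simp_all add: set_integrable_def set_lebesgue_integral_def)
qed

text \<open>Since dx = dt/(n^2 t^2) for t = 1/(n^2 x + 1), the map
  q \<mapsto> n (n^2 x + 1)^(-(s/2+1)) q(t) is an isometry from L^2((0,1), t^s dt) to
  L^2((0,\<infinity>), dx); jacobi_fun n s k is the image of the normalised P_k.\<close>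
definition jacobi_norm :: "real \<Rightarrow> nat \<Rightarrow> real" where
  "jacobi_norm s k = sqrt (s + 2 * real k + 1) / fact k"

definition jacobi_fun :: "nat \<Rightarrow> real \<Rightarrow> nat \<Rightarrow> real \<Rightarrow> real" where
  "jacobi_fun n s k x =
     real n * jacobi_norm s k * ((real n)^2 * x + 1) powr (-(s/2 + 1)) *
     poly (jacobi_poly s k) (1 / ((real n)^2 * x + 1))"

lemma jacobi_norm_pos: "s > -1 \<Longrightarrow> jacobi_norm s k > 0"
  by (simp add: jacobi_norm_def)

lemma jacobi_norm_squared: "s > -1 \<Longrightarrow> (jacobi_norm s k)^2 = (s + 2 * real k + 1) / (fact k)^2"
  by (simp add: jacobi_norm_def power_divide)

lemma jacobi_fun_mult:
  assumes "x \<ge> 0"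
  shows "jacobi_fun n s i x * jacobi_fun n s j x =
     (\<Sum>a\<le>i. \<Sum>b\<le>j. (real n)^2 * jacobi_norm s i * jacobi_norm s j *
        jacobi_coeff s i a * jacobi_coeff s j b * ((real n)^2 * x + 1) powr (-(s + 2 + real (a + b))))"
proof -
  define y where "y = (real n)^2 * x + 1"
  have "y > 0" unfolding y_def using assms by (simp add: add_nonneg_pos)
  have powers: "y powr (-(s/2 + 1)) * y powr (-(s/2 + 1)) * (1/y)^a * (1/y)^b =
                y powr (-(s + 2 + real (a + b)))" for a b
  proof -
    have "y powr (- real (a + b)) = inverse (y ^ (a + b))"
      using powr_realpow[OF \<open>y > 0\<close>, of "a + b"] by (simp only: powr_minus)
    then have "(1/y)^a * (1/y)^b = y powr (- real (a + b))"
      by (simp add: power_add divide_inverse power_inverse)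
    then show ?thesis using \<open>y > 0\<close> by (simp add: powr_add[symmetric] mult.assoc)
  qed
  define C where "C = (real n)^2 * jacobi_norm s i * jacobi_norm s j"
  have "poly (jacobi_poly s i) (1/y) * poly (jacobi_poly s j) (1/y) =
      (\<Sum>a\<le>i. \<Sum>b\<le>j. jacobi_coeff s i a * jacobi_coeff s j b * ((1/y)^a * (1/y)^b))"
    unfolding poly_jacobi_poly sum_product by (simp add: algebra_simps)
  then have "jacobi_fun n s i x * jacobi_fun n s j x =
      C * (y powr (-(s/2 + 1)) * y powr (-(s/2 + 1))) *
      (\<Sum>a\<le>i. \<Sum>b\<le>j. jacobi_coeff s i a * jacobi_coeff s j b * ((1/y)^a * (1/y)^b))"
    unfolding jacobi_fun_def y_def[symmetric] C_def by (simp add: power2_eq_square algebra_simps)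
  also have "\<dots> = (\<Sum>a\<le>i. \<Sum>b\<le>j. (C * jacobi_coeff s i a * jacobi_coeff s j b) *
        (y powr (-(s/2 + 1)) * y powr (-(s/2 + 1)) * (1/y)^a * (1/y)^b))"
    by (simp add: sum_distrib_left algebra_simps)
  also have "\<dots> = (\<Sum>a\<le>i. \<Sum>b\<le>j. (C * jacobi_coeff s i a * jacobi_coeff s j b) *
        y powr (-(s + 2 + real (a + b))))"
    by (simp only: powers)
  finally show ?thesis unfolding y_def C_def .
qed

text \<open>Each product J_i J_j is a finite sum of powers (n^2 x + 1)^(-(s+2+a+b)), which
  integrate to 1/(n^2 (s+1+a+b)), so orthonormality reduces to jacobi_orthogonality.\<close>
lemma jacobi_fun_orthonormal:
  assumes s: "s > -1" and n: "n > 0"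
  shows "set_integrable lborel {0<..} (\<lambda>x. jacobi_fun n s i x * jacobi_fun n s j x)"
    and "(LINT x:{0<..}|lborel. jacobi_fun n s i x * jacobi_fun n s j x) = (if i = j then 1 else 0)"
proof -
  define K where "K a b = (real n)^2 * jacobi_norm s i * jacobi_norm s j *
    jacobi_coeff s i a * jacobi_coeff s j b" for a b
  define G where "G a b x = K a b * ((real n)^2 * x + 1) powr (-(s + 2 + real (a + b)))" for a b x
  have "(real n)^2 > 0" using n by simp
  have exponent: "s + 2 + real (a + b) > 1" for a b using s by simp
  have G_int: "set_integrable lborel {0<..} (G a b)" for a b
    unfolding G_def using set_integral_affine_powr(1)[OF \<open>(real n)^2 > 0\<close> exponent] by simp
  have G_val: "(LINT x:{0<..}|lborel. G a b x) = K a b / ((real n)^2 * (s + 1 + real a + real b))"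
    for a b
    unfolding G_def using set_integral_affine_powr(2)[OF \<open>(real n)^2 > 0\<close> exponent]
    by (simp add: algebra_simps)
  have K_div: "K a b / ((real n)^2 * q) = jacobi_norm s i * jacobi_norm s j *
      (jacobi_coeff s i a * jacobi_coeff s j b / q)" for a b q
    using \<open>(real n)^2 > 0\<close> by (simp add: K_def)
  have eq: "jacobi_fun n s i x * jacobi_fun n s j x = (\<Sum>a\<le>i. \<Sum>b\<le>j. G a b x)"
    if "x \<in> {0<..}" for x
    using that jacobi_fun_mult[of x n s i j] by (simp add: G_def K_def)
  have int_sum: "set_integrable lborel {0<..} (\<lambda>x. \<Sum>a\<le>i. \<Sum>b\<le>j. G a b x)"
    by (intro set_integrable_sum G_int)
  then show "set_integrable lborel {0<..} (\<lambda>x. jacobi_fun n s i x * jacobi_fun n s j x)"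
    by (rule set_integrable_cong[THEN iffD2, rotated 3]) (auto simp: eq)
  have "(LINT x:{0<..}|lborel. jacobi_fun n s i x * jacobi_fun n s j x) =
        (LINT x:{0<..}|lborel. (\<Sum>a\<le>i. \<Sum>b\<le>j. G a b x))"
    using eq by (intro set_lebesgue_integral_cong) auto
  also have "\<dots> = jacobi_norm s i * jacobi_norm s j *
      (\<Sum>a\<le>i. \<Sum>b\<le>j. jacobi_coeff s i a * jacobi_coeff s j b / (s + 1 + real a + real b))"
    by (simp add: set_integral_sum set_integrable_sum G_int G_val K_div sum_distrib_left)
  also have "\<dots> = (if i = j then 1 else 0)"
    using jacobi_orthogonality[OF s] jacobi_norm_squared[OF s] s
    by (simp add: power2_eq_square field_simps)
  finally show "(LINT x:{0<..}|lborel. jacobi_fun n s i x * jacobi_fun n s j x) =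
      (if i = j then 1 else 0)" .
qed

lemma poly_altdef_lessThan:
  fixes p :: "'a::comm_semiring_1 poly"
  assumes "degree p < N"
  shows "poly p x = (\<Sum>i<N. coeff p i * x^i)"
proof -
  have "poly p x = (\<Sum>i\<le>degree p. coeff p i * x^i)" by (rule poly_altdef)
  also have "\<dots> = (\<Sum>i<N. coeff p i * x^i)"
    using assms by (intro sum.mono_neutral_left) (auto simp: coeff_eq_0)
  finally show ?thesis .
qed

lemma basis_variable_eq:
  assumes "x \<ge> 0"
  shows "((real n)^2 * x - 1) / ((real n)^2 * x + 1) = 1 - 2 * (1 / ((real n)^2 * x + 1))"
proof -
  have "(real n)^2 * x + 1 > 0" using assms by (simp add: add_nonneg_pos)
  then show ?thesis by (simp add: field_simps)
qed

lemma jacobi_fun_in_span_basis_fun: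
  assumes "k < n"
  shows "\<exists>c. \<forall>x>0. jacobi_fun n s k x = (\<Sum>l<n. c l * basis_fun n s l x)"
proof -
  define Q where "Q = pcompose (jacobi_poly s k) [:1/2, -1/2:]"
  have "degree Q < n"
    unfolding Q_def using degree_pcompose_le[of "jacobi_poly s k" "[:1/2, -1/2:]"]
      degree_jacobi_poly_le[of s k] assms
    by simp
  have "jacobi_fun n s k x = (\<Sum>l<n. (real n * jacobi_norm s k * coeff Q l) * basis_fun n s l x)"
    if "x > 0" for x
  proof -
    define w where "w = ((real n)^2 * x - 1) / ((real n)^2 * x + 1)"
    have t: "1 / ((real n)^2 * x + 1) = poly [:1/2, -1/2:] w"
    proof -
      have "(real n)^2 * x + 1 > 0" using that by (simp add: add_nonneg_pos)
      then show ?thesis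
        unfolding w_def basis_variable_eq[OF less_imp_le[OF that]] by (simp add: field_simps)
    qed
    have "poly (jacobi_poly s k) (1 / ((real n)^2 * x + 1)) = poly Q w"
      unfolding Q_def poly_pcompose t ..
    also have "\<dots> = (\<Sum>l<n. coeff Q l * w^l)" by (rule poly_altdef_lessThan[OF \<open>degree Q < n\<close>])
    finally show ?thesis
      by (simp add: jacobi_fun_def basis_fun_def w_def sum_distrib_left algebra_simps)
  qed
  then show ?thesis by (intro exI[of _ "\<lambda>l. real n * jacobi_norm s k * coeff Q l"]) simp
qed

lemma basis_fun_span_in_span_jacobi_fun:
  assumes s: "s > -1" and n: "n > 0"
    and f: "\<forall>x>0. f x = (\<Sum>l<n. c l * basis_fun n s l x)"
  shows "\<exists>d. \<forall>x>0. f x = (\<Sum>k<n. d k * jacobi_fun n s k x)"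
proof -
  define R :: "real poly" where "R = (\<Sum>l<n. smult (c l) ([:1, -2:] ^ l))"
  have "degree R < n"
  proof -
    have "degree R \<le> n - 1"
      unfolding R_def
    proof (rule degree_sum_le)
      fix l assume "l \<in> {..<n}"
      then show "degree (smult (c l) ([:1, -2:] ^ l :: real poly)) \<le> n - 1"
        using degree_power_le[of "[:1, -2:] :: real poly" l] by (auto simp: degree_smult_eq)
    qed simp
    then show ?thesis using n by simp
  qed
  then obtain d where d: "R = (\<Sum>k<n. smult (d k) (jacobi_poly s k))"
    using poly_in_span_jacobi_poly[OF s] by blast
  have "f x = (\<Sum>k<n. d k / (real n * jacobi_norm s k) * jacobi_fun n s k x)" if "x > 0" for x
  proof -
    define t where "t = 1 / ((real n)^2 * x + 1)"
    have w: "((real n)^2 * x - 1) / ((real n)^2 * x + 1) = 1 - 2 * t"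
      unfolding t_def using that by (intro basis_variable_eq) simp
    have "f x = (\<Sum>l<n. c l * basis_fun n s l x)" using f that by blast
    also have "\<dots> = ((real n)^2 * x + 1) powr (-(s/2 + 1)) * (\<Sum>l<n. c l * (1 - 2 * t)^l)"
      unfolding basis_fun_def w by (simp add: sum_distrib_right mult_ac)
    also have "(\<Sum>l<n. c l * (1 - 2 * t)^l) = poly R t"
      by (simp add: R_def poly_sum algebra_simps)
    also have "((real n)^2 * x + 1) powr (-(s/2 + 1)) * poly R t =
        (\<Sum>k<n. ((real n)^2 * x + 1) powr (-(s/2 + 1)) * (d k * poly (jacobi_poly s k) t))"
      by (simp add: d poly_sum sum_distrib_left)
    also have "\<dots> = (\<Sum>k<n. d k / (real n * jacobi_norm s k) * jacobi_fun n s k x)"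
    proof (rule sum.cong[OF refl])
      fix k
      show "((real n)^2 * x + 1) powr (-(s/2 + 1)) * (d k * poly (jacobi_poly s k) t) =
          d k / (real n * jacobi_norm s k) * jacobi_fun n s k x"
        using n jacobi_norm_pos[OF s, of k] by (simp add: jacobi_fun_def t_def)
    qed
    finally show ?thesis .
  qed
  then show ?thesis by (intro exI[of _ "\<lambda>k. d k / (real n * jacobi_norm s k)"]) simp
qed

lemma is_onb_jacobi_fun:
  assumes "s > -1" "n > 0"
  shows "is_onb n s (jacobi_fun n s)"
  unfolding is_onb_def using jacobi_fun_in_span_basis_fun jacobi_fun_orthonormal[OF assms] by blast

section \<open>Bessel's inequality for the kernel\<close>

lemma set_integral_orthonormal_combination:
  fixes J :: "nat \<Rightarrow> 'a \<Rightarrow> real"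
  assumes int: "\<And>i j. i < n \<Longrightarrow> j < n \<Longrightarrow> set_integrable M S (\<lambda>x. J i x * J j x)"
    and orth: "\<And>i j. i < n \<Longrightarrow> j < n \<Longrightarrow>
      (LINT x:S|M. J i x * J j x) = (if i = j then 1 else 0)"
  shows "(LINT x:S|M. (\<Sum>i<n. a i * J i x) * (\<Sum>j<n. b j * J j x)) = (\<Sum>i<n. a i * b i)"
proof -
  have "(LINT x:S|M. (\<Sum>i<n. a i * J i x) * (\<Sum>j<n. b j * J j x)) =
        (LINT x:S|M. (\<Sum>i<n. \<Sum>j<n. a i * b j * (J i x * J j x)))"
    by (simp add: sum_product algebra_simps)
  also have "\<dots> = (\<Sum>i<n. LINT x:S|M. (\<Sum>j<n. a i * b j * (J i x * J j x)))"
    using int by (intro set_integral_sum set_integrable_sum set_integrable_mult_right) auto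
  also have "\<dots> = (\<Sum>i<n. \<Sum>j<n. LINT x:S|M. a i * b j * (J i x * J j x))"
    using int by (intro sum.cong refl set_integral_sum set_integrable_mult_right) auto
  also have "\<dots> = (\<Sum>i<n. \<Sum>j<n. a i * b j * (LINT x:S|M. J i x * J j x))"
    by simp
  also have "\<dots> = (\<Sum>i<n. \<Sum>j<n. a i * b j * (if i = j then 1 else 0))"
    by (auto intro!: sum.cong simp: orth)
  also have "\<dots> = (\<Sum>i<n. a i * b i)"
    by (simp add: if_distrib cong: if_cong)
  finally show ?thesis .
qed

text \<open>Bessel's inequality for the orthonormal vectors A l, via Cauchy--Schwarz.\<close>
lemma sum_square_le_orthonormal_rows:
  fixes A :: "nat \<Rightarrow> nat \<Rightarrow> real"
  assumes orth: "\<And>l m. l < n \<Longrightarrow> m < n \<Longrightarrow> (\<Sum>k<n. A l k * A m k) = (if l = m then 1 else 0)"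
  shows "(\<Sum>l<n. (\<Sum>k<n. A l k * v k)^2) \<le> (\<Sum>k<n. (v k)^2)"
proof -
  define E where "E l = (\<Sum>k<n. A l k * v k)" for l
  define D where "D k = (\<Sum>l<n. E l * A l k)" for k
  define S where "S = (\<Sum>l<n. (E l)^2)"
  have DV: "(\<Sum>k<n. D k * v k) = S"
    unfolding D_def S_def E_def sum_distrib_right sum_distrib_left power2_eq_square
    by (subst sum.swap) (simp add: algebra_simps)
  have "(\<Sum>k<n. (D k)^2) = (\<Sum>k<n. \<Sum>l<n. \<Sum>m<n. E l * E m * (A l k * A m k))"
    unfolding D_def power2_eq_square sum_product by (simp add: algebra_simps)
  also have "\<dots> = (\<Sum>l<n. \<Sum>m<n. \<Sum>k<n. E l * E m * (A l k * A m k))"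
    by (subst sum.swap) (rule sum.cong[OF refl], rule sum.swap)
  also have "\<dots> = (\<Sum>l<n. \<Sum>m<n. E l * E m * (\<Sum>k<n. A l k * A m k))"
    by (simp add: sum_distrib_left)
  also have "\<dots> = (\<Sum>l<n. \<Sum>m<n. E l * E m * (if l = m then 1 else 0))"
    by (auto intro!: sum.cong simp: orth)
  also have "\<dots> = S"
    by (simp add: S_def power2_eq_square if_distrib cong: if_cong)
  finally have DD: "(\<Sum>k<n. (D k)^2) = S" .
  have "S^2 \<le> S * (\<Sum>k<n. (v k)^2)"
    using Cauchy_Schwarz_ineq_sum[of D v "{..<n}"] unfolding DV DD .
  moreover have "S \<ge> 0" unfolding S_def by (simp add: sum_nonneg)
  ultimately have "S \<le> (\<Sum>k<n. (v k)^2)"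
    by (cases "S = 0") (auto simp: power2_eq_square sum_nonneg)
  then show ?thesis unfolding S_def E_def .
qed

lemma is_onb_sum_square_le_jacobi_fun:
  assumes s: "s > -1" and n: "n > 0" and x: "x > 0" and onb: "is_onb n s e"
  shows "(\<Sum>l<n. (e l x)^2) \<le> (\<Sum>k<n. (jacobi_fun n s k x)^2)"
proof -
  have "\<exists>a. \<forall>y>0. e l y = (\<Sum>k<n. a k * jacobi_fun n s k y)" if "l < n" for l
  proof -
    obtain c where "\<forall>y>0. e l y = (\<Sum>j<n. c j * basis_fun n s j y)"
      using onb \<open>l < n\<close> unfolding is_onb_def by blast
    then show ?thesis by (rule basis_fun_span_in_span_jacobi_fun[OF s n])
  qed
  then obtain A where A: "\<And>l y. l < n \<Longrightarrow> y > 0 \<Longrightarrow> e l y = (\<Sum>k<n. A l k * jacobi_fun n s k y)"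
    by metis
  have "(\<Sum>k<n. A l k * A m k) = (if l = m then 1 else 0)" if "l < n" "m < n" for l m
  proof -
    have "(\<Sum>k<n. A l k * A m k) = (LINT y:{0<..}|lborel.
        (\<Sum>k<n. A l k * jacobi_fun n s k y) * (\<Sum>k<n. A m k * jacobi_fun n s k y))"
      using jacobi_fun_orthonormal[OF s n]
      by (intro set_integral_orthonormal_combination[symmetric])
    also have "\<dots> = (LINT y:{0<..}|lborel. e l y * e m y)"
      using A that by (intro set_lebesgue_integral_cong) auto
    also have "\<dots> = (if l = m then 1 else 0)"
      using onb that unfolding is_onb_def by blast
    finally show ?thesis .
  qed
  then have "(\<Sum>l<n. (\<Sum>k<n. A l k * jacobi_fun n s k x)^2) \<le> (\<Sum>k<n. (jacobi_fun n s k x)^2)"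
    by (rule sum_square_le_orthonormal_rows)
  then show ?thesis using A x by simp
qed

lemma Kdiag_le_sum_jacobi_fun:
  assumes "s > -1" "n > 0" "x > 0"
  shows "Kdiag n s x \<le> (\<Sum>k<n. (jacobi_fun n s k x)^2)"
proof -
  have "is_onb n s (SOME e. is_onb n s e)"
    using is_onb_jacobi_fun[OF assms(1,2)] by (rule someI[where P = "is_onb n s"])
  then show ?thesis
    unfolding Kdiag_def Let_def using is_onb_sum_square_le_jacobi_fun[OF assms] by blast
qed

section \<open>Uniform decay of the kernel\<close>

lemma pochhammer_ge_one: "z \<ge> 1 \<Longrightarrow> pochhammer (z::real) a \<ge> 1"
  unfolding pochhammer_prod by (rule prod_ge_1) auto

lemma pochhammer_ge_min:
  fixes s :: real
  assumes "s > -1"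
  shows "pochhammer (s + 1) a \<ge> min 1 (s + 1)"
proof (cases a)
  case (Suc b)
  have "pochhammer (s + 1) a = (s + 1) * pochhammer (s + 2) b"
    using Suc by (simp add: pochhammer_rec algebra_simps)
  moreover have "pochhammer (s + 2) b \<ge> 1" using assms by (intro pochhammer_ge_one) simp
  ultimately have "pochhammer (s + 1) a \<ge> s + 1"
    using assms mult_left_mono[of 1 "pochhammer (s + 2) b" "s + 1"] by simp
  then show ?thesis by simp
qed simp

lemma pochhammer_le_power:
  assumes "z \<ge> 0" "\<And>i. i < a \<Longrightarrow> z + real i \<le> Q"
  shows "pochhammer (z::real) a \<le> Q ^ a"
proof -
  have "pochhammer z a = (\<Prod>i<a. z + real i)" by (simp add: pochhammer_prod atLeast0LessThan)
  also have "\<dots> \<le> (\<Prod>i<a. Q)" using assms by (intro prod_mono) auto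
  finally show ?thesis by simp
qed

lemma binomial_le_power_div_fact: "real (k choose a) \<le> real k ^ a / fact a"
proof -
  have "real ((k choose a) * fact a) \<le> real (k ^ a)" by (rule of_nat_mono[OF binomial_fact_pow])
  then show ?thesis by (simp add: field_simps)
qed

lemma sum_power_div_fact_le_exp: "M \<ge> 0 \<Longrightarrow> (\<Sum>a\<le>k. M ^ a / fact a) \<le> exp (M::real)"
  using summable_exp_generic[of M]
  by (auto simp: exp_def divide_inverse ac_simps intro!: sum_le_suminf)

text \<open>(s + a + 1)_k = (s + 1)_k (s + 1 + k)_a / (s + 1)_a, since both sides equal
  (s + 1)_(a+k) / (s + 1)_a.\<close>
lemma jacobi_coeff_bound:
  assumes s: "s > -1" and "a \<le> k"
  shows "\<bar>jacobi_coeff s k a\<bar> \<le>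
    pochhammer (s + 1) k * ((max s 0 + 2) * (real k)^2) ^ a / (fact a * min 1 (s + 1))"
proof -
  define M where "M = max s 0 + 2"
  define m where "m = min 1 (s + 1)"
  have "m > 0" "M \<ge> 0" unfolding m_def M_def using s by auto
  have Pk: "pochhammer (s + 1) k > 0" using s by (intro pochhammer_pos) simp
  have Pa: "pochhammer (s + 1) a \<ge> m" unfolding m_def by (rule pochhammer_ge_min[OF s])
  have split: "pochhammer (s + real a + 1) k =
      pochhammer (s + 1) k * pochhammer (s + 1 + real k) a / pochhammer (s + 1) a"
    using pochhammer_product'[of "s + 1" a k] pochhammer_product'[of "s + 1" k a]
      pochhammer_pos[of "s + 1" a] s
    by (simp add: field_simps add.commute add.left_commute)
  have Pka: "pochhammer (s + 1 + real k) a \<le> (M * real k) ^ a"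
  proof (rule pochhammer_le_power)
    fix i assume "i < a"
    then have "real i + 1 \<le> real k" using assms(2) by linarith
    moreover have "s \<le> s * real k" if "s \<ge> 0"
      using that \<open>real i + 1 \<le> real k\<close> mult_left_mono[of 1 "real k" s] by simp
    ultimately show "s + 1 + real k + real i \<le> M * real k"
      unfolding M_def by (cases "s \<ge> 0") (auto simp: algebra_simps)
  qed (use s in simp)
  have "pochhammer (s + real a + 1) k \<le> pochhammer (s + 1) k * (M * real k) ^ a / m"
    unfolding split using Pk Pka Pa \<open>m > 0\<close> \<open>M \<ge> 0\<close>
    by (intro frac_le mult_left_mono) auto
  moreover have "pochhammer (s + real a + 1) k \<ge> 0" using s by (intro pochhammer_nonneg) simp
  ultimately have "real (k choose a) * pochhammer (s + real a + 1) k \<le>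
      (real k ^ a / fact a) * (pochhammer (s + 1) k * (M * real k) ^ a / m)"
    by (intro mult_mono binomial_le_power_div_fact) auto
  moreover have "\<bar>jacobi_coeff s k a\<bar> = real (k choose a) * pochhammer (s + real a + 1) k"
    using \<open>pochhammer (s + real a + 1) k \<ge> 0\<close> by (simp add: jacobi_coeff_def abs_mult)
  ultimately have "\<bar>jacobi_coeff s k a\<bar> \<le>
      (real k ^ a / fact a) * (pochhammer (s + 1) k * (M * real k) ^ a / m)"
    by simp
  also have "\<dots> = pochhammer (s + 1) k * (M * (real k)^2) ^ a / (fact a * m)"
    by (simp add: power_mult_distrib power2_eq_square)
  finally show ?thesis unfolding M_def m_def .
qed

lemma jacobi_poly_bound:
  assumes s: "s > -1"
  obtains E where "\<And>k t. t \<ge> 0 \<Longrightarrow> (real k)^2 * t \<le> 1 \<Longrightarrow>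
    \<bar>poly (jacobi_poly s k) t\<bar> \<le> E * pochhammer (s + 1) k"
proof
  define M where "M = max s 0 + 2"
  define m where "m = min 1 (s + 1)"
  have "m > 0" "M \<ge> 0" unfolding m_def M_def using s by auto
  fix k and t :: real
  assume t: "t \<ge> 0" "(real k)^2 * t \<le> 1"
  have Pk: "pochhammer (s + 1) k > 0" using s by (intro pochhammer_pos) simp
  have "\<bar>jacobi_coeff s k a * t^a\<bar> \<le> pochhammer (s + 1) k / m * (M ^ a / fact a)"
    if "a \<le> k" for a
  proof -
    have "\<bar>jacobi_coeff s k a * t^a\<bar> = \<bar>jacobi_coeff s k a\<bar> * t^a"
      using t by (simp add: abs_mult)
    also have "\<dots> \<le> pochhammer (s + 1) k * (M * (real k)^2) ^ a / (fact a * m) * t^a"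
      using jacobi_coeff_bound[OF s that] t unfolding M_def m_def by (intro mult_right_mono) auto
    also have "\<dots> = pochhammer (s + 1) k / m * (M ^ a / fact a) * ((real k)^2 * t) ^ a"
      by (simp add: power_mult_distrib mult_ac)
    also have "\<dots> \<le> pochhammer (s + 1) k / m * (M ^ a / fact a)"
      using t Pk \<open>m > 0\<close> \<open>M \<ge> 0\<close> by (intro mult_right_le_one_le power_le_one) auto
    finally show ?thesis .
  qed
  then have "\<bar>poly (jacobi_poly s k) t\<bar> \<le> (\<Sum>a\<le>k. pochhammer (s + 1) k / m * (M ^ a / fact a))"
    unfolding poly_jacobi_poly by (intro order.trans[OF sum_abs] sum_mono) simp
  also have "\<dots> \<le> pochhammer (s + 1) k / m * exp M"
    unfolding sum_distrib_left[symmetric]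
    using Pk \<open>m > 0\<close> by (intro mult_left_mono sum_power_div_fact_le_exp \<open>M \<ge> 0\<close>) auto
  finally show "\<bar>poly (jacobi_poly s k) t\<bar> \<le> exp M / m * pochhammer (s + 1) k"
    by (simp add: field_simps)
qed

lemma sum_jacobi_weights:
  fixes s :: real
  assumes s: "s > -1"
  shows "(\<Sum>k<Suc m. (s + 2 * real k + 1) * (pochhammer (s + 1) k / fact k)^2) =
         (pochhammer (s + 1) (Suc m))^2 / ((s + 1) * (fact m)^2)"
proof (induction m)
  case 0
  then show ?case using s by (simp add: power2_eq_square)
next
  case (Suc m)
  define P where "P = pochhammer (s + 1) (Suc m)"
  have P_Suc: "pochhammer (s + 1) (Suc (Suc m)) = P * (s + real m + 2)"
    unfolding P_def by (simp add: pochhammer_Suc algebra_simps)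
  have fact_Suc: "fact (Suc m) = (real m + 1) * (fact m :: real)" by simp
  have "s + 1 > 0" "(fact m :: real) > 0" using s by auto
  have "(\<Sum>k<Suc (Suc m). (s + 2 * real k + 1) * (pochhammer (s + 1) k / fact k)^2) =
        P^2 / ((s + 1) * (fact m)^2) + (s + 2 * real m + 3) * (P / ((real m + 1) * fact m))^2"
    using Suc.IH by (simp add: P_def algebra_simps)
  also have "\<dots> = P^2 * ((real m + 1)^2 + (s + 1) * (s + 2 * real m + 3)) /
      ((s + 1) * ((real m + 1) * fact m)^2)"
    using \<open>s + 1 > 0\<close> \<open>fact m > 0\<close>
    by (simp add: divide_simps) (simp add: algebra_simps power2_eq_square)
  also have "(real m + 1)^2 + (s + 1) * (s + 2 * real m + 3) = (s + real m + 2)^2"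
    by (simp add: power2_eq_square algebra_simps)
  finally show ?case by (simp only: P_Suc fact_Suc power_mult_distrib)
qed

text \<open>(z)_(m+1) / (m! m^z) is Gauss's product for 1/Gamma(z), hence bounded in m.\<close>
lemma pochhammer_le_fact_mult_powr:
  fixes s :: real
  obtains B where "B > 0"
    and "\<And>m. m \<ge> 1 \<Longrightarrow> pochhammer (s + 1) (Suc m) \<le> B * fact m * real m powr (s + 1)"
proof -
  have "convergent (rGamma_series (s + 1))"
    using rGamma_series_LIMSEQ by (auto simp: convergent_def)
  then obtain B where B: "B > 0" "\<And>m. norm (rGamma_series (s + 1) m) \<le> B"
    by (auto dest: convergent_imp_Bseq elim!: BseqE)
  have "pochhammer (s + 1) (Suc m) \<le> B * fact m * real m powr (s + 1)" if "m \<ge> 1" for m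
  proof -
    have pos: "fact m * real m powr (s + 1) > 0" using that by simp
    have "rGamma_series (s + 1) m = pochhammer (s + 1) (Suc m) / (fact m * real m powr (s + 1))"
      using that by (simp add: rGamma_series_def powr_def mult.commute)
    moreover have "pochhammer (s + 1) (Suc m) / (fact m * real m powr (s + 1)) \<le>
        \<bar>pochhammer (s + 1) (Suc m)\<bar> / (fact m * real m powr (s + 1))"
      using pos by (intro divide_right_mono) auto
    ultimately have "pochhammer (s + 1) (Suc m) / (fact m * real m powr (s + 1)) \<le> B"
      using B(2)[of m] by simp
    then show ?thesis using pos by (simp add: divide_le_eq algebra_simps)
  qed
  with B(1) show ?thesis using that by blast
qed

lemma sum_jacobi_weights_bound:
  fixes s :: real
  assumes s: "s > -1"
  obtains C where "C > 0" and "\<And>n. n \<ge> 1 \<Longrightarrow>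
    (\<Sum>k<n. (s + 2 * real k + 1) * (pochhammer (s + 1) k / fact k)^2) \<le> C * real n powr (2 * s + 2)"
proof -
  obtain B where B: "B > 0"
    "\<And>m. m \<ge> 1 \<Longrightarrow> pochhammer (s + 1) (Suc m) \<le> B * fact m * real m powr (s + 1)"
    using pochhammer_le_fact_mult_powr by blast
  define C where "C = (s + 1) + B^2 / (s + 1)"
  have "C > 0" unfolding C_def using s B by (simp add: add_pos_nonneg)
  have "(\<Sum>k<n. (s + 2 * real k + 1) * (pochhammer (s + 1) k / fact k)^2) \<le> C * real n powr (2 * s + 2)"
    if n: "n \<ge> 1" for n
  proof -
    obtain m where nm: "n = Suc m" using n by (cases n) auto
    have npow: "real n powr (2 * s + 2) \<ge> 1" using n s by (intro ge_one_powr_ge_zero) auto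
    show ?thesis
    proof (cases "m = 0")
      case True
      then have "(\<Sum>k<n. (s + 2 * real k + 1) * (pochhammer (s + 1) k / fact k)^2) = s + 1"
        using nm by simp
      also have "\<dots> \<le> C" unfolding C_def using s by simp
      also have "\<dots> \<le> C * real n powr (2 * s + 2)" using \<open>C > 0\<close> npow by simp
      finally show ?thesis .
    next
      case False
      have "(pochhammer (s + 1) (Suc m))^2 \<le> (B * fact m * real m powr (s + 1))^2"
        using B(2)[of m] False s by (intro power_mono) (auto intro: pochhammer_nonneg)
      also have "\<dots> = B^2 * (fact m)^2 * real m powr (2 * s + 2)"
        using False by (simp add: power_mult_distrib powr_power)
      finally have "(pochhammer (s + 1) (Suc m))^2 / ((s + 1) * (fact m)^2) \<le>
          B^2 * (fact m)^2 * real m powr (2 * s + 2) / ((s + 1) * (fact m)^2)"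
        using s by (intro divide_right_mono) auto
      also have "\<dots> = B^2 / (s + 1) * real m powr (2 * s + 2)" by simp
      also have "\<dots> \<le> B^2 / (s + 1) * real n powr (2 * s + 2)"
        using s nm by (intro mult_left_mono powr_mono2) auto
      also have "\<dots> \<le> C * real n powr (2 * s + 2)"
        unfolding C_def using s npow by (intro mult_right_mono) auto
      finally show ?thesis unfolding nm sum_jacobi_weights[OF s] .
    qed
  qed
  with \<open>C > 0\<close> show ?thesis using that by blast
qed

lemma jacobi_fun_square:
  assumes "s > -1" "x \<ge> 0"
  shows "(jacobi_fun n s k x)^2 = (real n)^2 * ((real n)^2 * x + 1) powr (-(s + 2)) *
    ((s + 2 * real k + 1) / (fact k)^2 * (poly (jacobi_poly s k) (1 / ((real n)^2 * x + 1)))^2)"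
proof -
  define y where "y = (real n)^2 * x + 1"
  have "y > 0" unfolding y_def using assms(2) by (simp add: add_nonneg_pos)
  have "-(s + 2) = real 2 * (-(s/2 + 1))" by simp
  then have "(y powr (-(s/2 + 1)))^2 = y powr (-(s + 2))"
    using \<open>y > 0\<close> by (simp only:) (subst powr_power; simp)
  then show ?thesis
    unfolding jacobi_fun_def y_def[symmetric] power_mult_distrib jacobi_norm_squared[OF assms(1)]
    by (simp add: algebra_simps)
qed

lemma jacobi_fun_square_le:
  assumes s: "s > -1"
    and E: "\<And>k t. t \<ge> 0 \<Longrightarrow> (real k)^2 * t \<le> 1 \<Longrightarrow>
      \<bar>poly (jacobi_poly s k) t\<bar> \<le> E * pochhammer (s + 1) k"
    and "k < n" "x \<ge> 1"
  shows "(jacobi_fun n s k x)^2 \<le> E^2 * ((real n)^2 * ((real n)^2 * x + 1) powr (-(s + 2))) *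
    ((s + 2 * real k + 1) * (pochhammer (s + 1) k / fact k)^2)"
proof -
  define t where "t = 1 / ((real n)^2 * x + 1)"
  have "t \<ge> 0" unfolding t_def using assms(4) by simp
  have "(real k)^2 \<le> (real n)^2" using assms(3) by (intro power_mono) auto
  also have "\<dots> \<le> (real n)^2 * x" using assms(4) mult_left_mono[of 1 x "(real n)^2"] by simp
  finally have "(real k)^2 \<le> (real n)^2 * x" .
  then have "(real k)^2 * t \<le> 1" unfolding t_def using assms(4)
    by (simp add: divide_le_eq add_nonneg_pos)
  then have "(poly (jacobi_poly s k) t)^2 \<le> (E * pochhammer (s + 1) k)^2"
    using E[OF \<open>t \<ge> 0\<close>] power_mono[of "\<bar>poly (jacobi_poly s k) t\<bar>" _ 2] by simp
  then have "(s + 2 * real k + 1) / (fact k)^2 * (poly (jacobi_poly s k) t)^2 \<le>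
      (s + 2 * real k + 1) / (fact k)^2 * (E * pochhammer (s + 1) k)^2"
    using s by (intro mult_left_mono) auto
  then have "(jacobi_fun n s k x)^2 \<le> ((real n)^2 * ((real n)^2 * x + 1) powr (-(s + 2))) *
      ((s + 2 * real k + 1) / (fact k)^2 * (E * pochhammer (s + 1) k)^2)"
    unfolding jacobi_fun_square[OF s assms(4)[THEN order.trans[OF zero_le_one]]] t_def[symmetric]
    by (rule mult_left_mono) simp_all
  then show ?thesis by (simp add: power_mult_distrib power_divide mult_ac)
qed

lemma scaled_powr_le:
  assumes "s \<ge> -2" "n \<ge> 1" "x > 0"
  shows "(real n)^2 * ((real n)^2 * x + 1) powr (-(s + 2)) * real n powr (2 * s + 2) \<le>
    x powr (-(s + 2))"
proof -
  have "real n > 0" using assms(2) by simp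
  have "((real n)^2 * x + 1) powr (-(s + 2)) \<le> ((real n)^2 * x) powr (-(s + 2))"
    using assms \<open>real n > 0\<close> by (intro powr_mono2') auto
  also have "\<dots> = real n powr (- (2 * s + 4)) * x powr (-(s + 2))"
    using \<open>real n > 0\<close> assms(3)
    by (simp add: powr_mult powr_powr flip: powr_numeral)
  finally have "(real n)^2 * ((real n)^2 * x + 1) powr (-(s + 2)) * real n powr (2 * s + 2) \<le>
      (real n)^2 * (real n powr (- (2 * s + 4)) * x powr (-(s + 2))) * real n powr (2 * s + 2)"
    by (intro mult_right_mono mult_left_mono) auto
  also have "\<dots> = real n powr 2 * real n powr (- (2 * s + 4)) * real n powr (2 * s + 2) *
      x powr (-(s + 2))"
    using \<open>real n > 0\<close> by (simp add: powr_realpow algebra_simps)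
  also have "real n powr 2 * real n powr (- (2 * s + 4)) * real n powr (2 * s + 2) =
      real n powr (2 + (- (2 * s + 4)) + (2 * s + 2))"
    by (simp only: powr_add)
  also have "\<dots> = 1" using \<open>real n > 0\<close> by simp
  finally show ?thesis by simp
qed

lemma Kdiag_bound:
  assumes s: "s > -1"
  obtains C where "C > 0" and "\<And>n x. n \<ge> 1 \<Longrightarrow> x \<ge> 1 \<Longrightarrow> Kdiag n s x \<le> C * x powr (-(s + 2))"
proof -
  obtain E where E: "\<And>k t. t \<ge> 0 \<Longrightarrow> (real k)^2 * t \<le> 1 \<Longrightarrow>
      \<bar>poly (jacobi_poly s k) t\<bar> \<le> E * pochhammer (s + 1) k"
    using jacobi_poly_bound[OF s] by blast
  obtain C where C: "C > 0" "\<And>n. n \<ge> 1 \<Longrightarrow>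
      (\<Sum>k<n. (s + 2 * real k + 1) * (pochhammer (s + 1) k / fact k)^2) \<le> C * real n powr (2 * s + 2)"
    using sum_jacobi_weights_bound[OF s] by blast
  have "Kdiag n s x \<le> (E^2 * C + 1) * x powr (-(s + 2))" if "n \<ge> 1" "x \<ge> 1" for n x
  proof -
    define Q where "Q = (real n)^2 * ((real n)^2 * x + 1) powr (-(s + 2))"
    have "Q \<ge> 0" unfolding Q_def by simp
    have "Kdiag n s x \<le> (\<Sum>k<n. (jacobi_fun n s k x)^2)"
      using Kdiag_le_sum_jacobi_fun[OF s] that by simp
    also have "\<dots> \<le> (\<Sum>k<n. E^2 * Q * ((s + 2 * real k + 1) * (pochhammer (s + 1) k / fact k)^2))"
    proof (rule sum_mono)
      fix k assume "k \<in> {..<n}"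
      then show "(jacobi_fun n s k x)^2 \<le>
          E^2 * Q * ((s + 2 * real k + 1) * (pochhammer (s + 1) k / fact k)^2)"
        unfolding Q_def using jacobi_fun_square_le[OF s E _ that(2)] by simp
    qed
    also have "\<dots> \<le> E^2 * Q * (C * real n powr (2 * s + 2))"
      unfolding sum_distrib_left[symmetric] using C(2)[OF that(1)] \<open>Q \<ge> 0\<close>
      by (intro mult_left_mono) auto
    also have "\<dots> = E^2 * C * (Q * real n powr (2 * s + 2))" by (simp add: algebra_simps)
    also have "\<dots> \<le> E^2 * C * x powr (-(s + 2))"
      unfolding Q_def using scaled_powr_le[of s n x] s that C(1) by (intro mult_left_mono) auto
    also have "\<dots> \<le> (E^2 * C + 1) * x powr (-(s + 2))" by (simp add: distrib_right)
    finally show ?thesis .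
  qed
  moreover have "E^2 * C + 1 > 0" using C(1) by (simp add: add_nonneg_pos)
  ultimately show ?thesis using that[of "E^2 * C + 1"] by blast
qed

section \<open>Tails\<close>

lemma nn_integral_powr_atLeast:
  fixes p R :: real
  assumes p: "p > 1" and R: "R > 0"
  shows "(\<integral>\<^sup>+x. ennreal (x powr (-p)) * indicator {R..} x \<partial>lborel) = ennreal (R powr (1 - p) / (p - 1))"
proof -
  define F where "F x = - (x powr (1 - p)) / (p - 1)" for x
  have "(\<integral>\<^sup>+x. ennreal (x powr (-p)) * indicator {R..} x \<partial>lborel) = 0 - F R"
  proof (rule nn_integral_FTC_atLeast)
    show "DERIV F x :> x powr (-p)" if "R \<le> x" for x
    proof -
      have "x > 0" using that R by simp
      then have "DERIV F x :> - ((1 - p) * x powr (1 - p - 1)) / (p - 1)"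
        unfolding F_def using p by (auto intro!: derivative_eq_intros)
      also have "- ((1 - p) * x powr (1 - p - 1)) / (p - 1) = x powr (-p)"
        using p by (simp add: field_simps)
      finally show ?thesis .
    qed
    show "(F \<longlongrightarrow> 0) at_top" unfolding F_def using p by real_asymp
  qed auto
  then show ?thesis by (simp add: F_def)
qed

lemma Kdiag_tail_bound:
  assumes s: "s > -1"
  obtains C where "\<And>n R. n \<ge> 1 \<Longrightarrow> R \<ge> 1 \<Longrightarrow>
    (\<integral>\<^sup>+ x. ennreal (Kdiag n s x) * indicator {R..} x \<partial>lborel) \<le> ennreal (C * R powr (-(s + 1)))"
proof -
  obtain C where C: "C > 0" "\<And>n x. n \<ge> 1 \<Longrightarrow> x \<ge> 1 \<Longrightarrow> Kdiag n s x \<le> C * x powr (-(s + 2))"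
    using Kdiag_bound[OF s] by blast
  have "(\<integral>\<^sup>+ x. ennreal (Kdiag n s x) * indicator {R..} x \<partial>lborel) \<le>
      ennreal (C / (s + 1) * R powr (-(s + 1)))" if "n \<ge> 1" "R \<ge> 1" for n R
  proof -
    have "(\<integral>\<^sup>+ x. ennreal (Kdiag n s x) * indicator {R..} x \<partial>lborel) \<le>
        (\<integral>\<^sup>+ x. ennreal C * (ennreal (x powr (-(s + 2))) * indicator {R..} x) \<partial>lborel)"
      using C that by (intro nn_integral_mono) (auto simp: ennreal_mult[symmetric] split: split_indicator)
    also have "\<dots> = ennreal C * (\<integral>\<^sup>+ x. ennreal (x powr (-(s + 2))) * indicator {R..} x \<partial>lborel)"
      by (rule nn_integral_cmult) measurable
    also have "\<dots> = ennreal (C / (s + 1) * R powr (-(s + 1)))"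
      using s that C(1) by (subst nn_integral_powr_atLeast) (auto simp: algebra_simps simp flip: ennreal_mult)
    finally show ?thesis .
  qed
  then show ?thesis using that by blast
qed

theorem mainTheorem1:
  fixes s :: real
  assumes "s > -1"
  shows "\<forall>\<epsilon>>0. \<exists>R>0.
           (SUP n\<in>{1::nat..}. \<integral>\<^sup>+ x. ennreal (Kdiag n s x) * indicator {R..} x \<partial>lborel)
             < ennreal \<epsilon>"
proof (intro allI impI)
  fix \<epsilon> :: real
  assume "\<epsilon> > 0"
  obtain C where C: "\<And>n R. n \<ge> 1 \<Longrightarrow> R \<ge> 1 \<Longrightarrow>
      (\<integral>\<^sup>+ x. ennreal (Kdiag n s x) * indicator {R..} x \<partial>lborel) \<le> ennreal (C * R powr (-(s + 1)))"
    using Kdiag_tail_bound[OF assms] by blast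
  have "((\<lambda>R. C * R powr (-(s + 1))) \<longlongrightarrow> 0) at_top" using assms by real_asymp
  then have "eventually (\<lambda>R. C * R powr (-(s + 1)) < \<epsilon> \<and> R \<ge> 1) at_top"
    using \<open>\<epsilon> > 0\<close> by (intro eventually_conj order_tendstoD(2) eventually_ge_at_top)
  then obtain R where R: "C * R powr (-(s + 1)) < \<epsilon>" "R \<ge> 1"
    unfolding eventually_at_top_linorder by blast
  have "(SUP n\<in>{1::nat..}. \<integral>\<^sup>+ x. ennreal (Kdiag n s x) * indicator {R..} x \<partial>lborel) \<le>
      ennreal (C * R powr (-(s + 1)))"
    using C R(2) by (intro SUP_least) auto
  also have "\<dots> < ennreal \<epsilon>" using R(1) \<open>\<epsilon> > 0\<close> by (intro ennreal_lessI)
  finally show "\<exists>R>0. (SUP n\<in>{1::nat..}. \<integral>\<^sup>+ x. ennreal (Kdiag n s x) * indicator {R..} x \<partial>lborel)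
      < ennreal \<epsilon>"
    using R(2) by (intro exI[of _ R]) auto
qed

end
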